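(* Let $G_r=(V_r,E_r)$ (virtual network) and $G_s=(V_s,E_s)$ (substrate network) be simple, connected, undirected graphs, with integer demands $d_{\bar u}$ ($\bar u\in V_r$), $d_{\bar e}$ ($\bar e\in E_r$) and integer capacities $c_u$ ($u\in V_s$), $c_e$ ($e\in E_s$). Let $(x,y)$ be the incidence vector of a feasible mapping of $G_r$ on $G_s$. Then for every virtual edge $\bar e=(\bar u,\bar v)\in E_r$ and every leaf $l$ of $G_s$ (a node with exactly one neighbor, denoted $v_l$), the leaf equality $$y_{\bar e (l,v_l)} = x_{\bar u l}$$ holds.
   Context: A mapping $m=(m_V,m_E)$ of $G_r$ on $G_s$ consists of a node placement $m_V:V_r\to V_s$ which is one-to-one (distinct virtual nodes are placed on distinct substrate nodes), and an edge routing $m_E$ assigning to each virtual edge $\bar e=\{\bar u,\bar v\}\in E_r$ a loop-free path of $G_s$ whose endpoints are $m_V(\bar u)$ and $m_V(\bar v)$. The mapping is feasible if for each $u\in V_s$ the sum of $d_{\bar u}$ over virtual nodes $\bar u$ with $m_V(\bar u)=u$ is at most $c_u$, and for each $e\in E_s$ the sum of $d_{\bar e}$ over virtual edges $\bar e$ whose routing path contains $e$ is at most $c_e$. Each virtual edge is given a fixed arbitrary orientation, written $\bar e=(\bar u,\bar v)$. Let $E'_s=\bigcup_{\{u,v\}\in E_s}\{(u,v),(v,u)\}$ be the arc set of the bidirected substrate network. The incidence vector $(x,y)$ of a mapping $m$ has binary components $x_{\bar u u}$ ($\bar u\in V_r$, $u\in V_s$), equal to $1$ iff $m_V(\bar u)=u$,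 and $y_{\bar e a}$ ($\bar e\in E_r$, $a\in E'_s$), where for $\bar e=(\bar u,\bar v)$ and $a=(u,v)$, $y_{\bar e (u,v)}=1$ iff the path $m_E(\bar e)$, traversed from $m_V(\bar u)$ to $m_V(\bar v)$, uses the edge $\{u,v\}$ in the direction from $u$ to $v$. *)

theory Defs
  imports Main
begin

definition simple_graph :: "'a set \<Rightarrow> 'a set set \<Rightarrow> bool" where
  "simple_graph V E \<longleftrightarrow> finite V \<and>
     (\<forall>e\<in>E. \<exists>u v. e = {u, v} \<and> u \<noteq> v \<and> u \<in> V \<and> v \<in> V)"

definition is_walk :: "'a set \<Rightarrow> 'a set set \<Rightarrow> 'a list \<Rightarrow> bool" where
  "is_walk V E p \<longleftrightarrow> p \<noteq> [] \<and> set p \<subseteq> V \<and>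
     (\<forall>i. Suc i < length p \<longrightarrow> {p ! i, p ! Suc i} \<in> E)"

definition is_path :: "'a set \<Rightarrow> 'a set set \<Rightarrow> 'a list \<Rightarrow> bool" where
  "is_path V E p \<longleftrightarrow> is_walk V E p \<and> distinct p"

definition connected_graph :: "'a set \<Rightarrow> 'a set set \<Rightarrow> bool" where
  "connected_graph V E \<longleftrightarrow>
     (\<forall>u\<in>V. \<forall>v\<in>V. \<exists>p. is_walk V E p \<and> hd p = u \<and> last p = v)"

definition arcs_of :: "'a list \<Rightarrow> ('a \<times> 'a) set" where
  "arcs_of p = set (zip p (tl p))"

definition edges_of :: "'a list \<Rightarrow> 'a set set" where
  "edges_of p = (\<lambda>(u, v). {u, v}) ` arcs_of p"

definition orientation :: "'b set set \<Rightarrow> ('b set \<Rightarrow> 'b \<times> 'b) \<Rightarrow> bool" where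
  "orientation Er orient \<longleftrightarrow> (\<forall>e\<in>Er. e = {fst (orient e), snd (orient e)})"

definition is_mapping ::
  "'b set \<Rightarrow> 'b set set \<Rightarrow> ('b set \<Rightarrow> 'b \<times> 'b) \<Rightarrow> 'a set \<Rightarrow> 'a set set
     \<Rightarrow> ('b \<Rightarrow> 'a) \<Rightarrow> ('b set \<Rightarrow> 'a list) \<Rightarrow> bool" where
  "is_mapping Vr Er orient Vs Es mV mE \<longleftrightarrow>
     inj_on mV Vr \<and> mV ` Vr \<subseteq> Vs \<and>
     (\<forall>e\<in>Er. is_path Vs Es (mE e) \<and>
        hd (mE e) = mV (fst (orient e)) \<and> last (mE e) = mV (snd (orient e)))"

definition feasible_mapping ::
  "'b set \<Rightarrow> 'b set set \<Rightarrow> ('b set \<Rightarrow> 'b \<times> 'b) \<Rightarrow> 'a set \<Rightarrow> 'a set set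
     \<Rightarrow> ('b \<Rightarrow> int) \<Rightarrow> ('b set \<Rightarrow> int) \<Rightarrow> ('a \<Rightarrow> int) \<Rightarrow> ('a set \<Rightarrow> int)
     \<Rightarrow> ('b \<Rightarrow> 'a) \<Rightarrow> ('b set \<Rightarrow> 'a list) \<Rightarrow> bool" where
  "feasible_mapping Vr Er orient Vs Es dV dE cV cE mV mE \<longleftrightarrow>
     is_mapping Vr Er orient Vs Es mV mE \<and>
     (\<forall>u\<in>Vs. (\<Sum>ub\<in>{ub\<in>Vr. mV ub = u}. dV ub) \<le> cV u) \<and>
     (\<forall>e\<in>Es. (\<Sum>eb\<in>{eb\<in>Er. e \<in> edges_of (mE eb)}. dE eb) \<le> cE e)"

definition x_inc :: "('b \<Rightarrow> 'a) \<Rightarrow> 'b \<Rightarrow> 'a \<Rightarrow> nat" where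
  "x_inc mV ub u = (if mV ub = u then 1 else 0)"

definition y_inc :: "('b set \<Rightarrow> 'a list) \<Rightarrow> 'b set \<Rightarrow> 'a \<times> 'a \<Rightarrow> nat" where
  "y_inc mE eb a = (if a \<in> arcs_of (mE eb) then 1 else 0)"

end

theory Submission
  imports Defs
begin

text \<open>A loop-free path can pass through a leaf l only at one of its ends, since both
  path-neighbours of an interior vertex l would be the unique graph-neighbour of l.
  Hence the path uses the arc from l to its neighbour iff it starts at l, provided
  it has at least one arc, which holds because the two end nodes of a virtual edge
  are distinct and the node placement is injective.\<close>

lemma arcs_of_iff_nth:
  "(a, b) \<in> arcs_of p \<longleftrightarrow> (\<exists>i. Suc i < length p \<and> p ! i = a \<and> p ! Suc i = b)"
  unfolding arcs_of_def in_set_zip by (auto simp: nth_tl less_diff_conv)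

lemma is_walk_edge_nth:
  assumes "is_walk V E p" and "Suc i < length p"
  shows "{p ! i, p ! Suc i} \<in> E"
  using assms unfolding is_walk_def by blast

lemma is_path_length_ge_2:
  assumes "is_path V E p" and "hd p \<noteq> last p"
  shows "2 \<le> length p"
proof (rule ccontr)
  assume "\<not> 2 \<le> length p"
  moreover have "p \<noteq> []" using assms(1) unfolding is_path_def is_walk_def by blast
  ultimately obtain a where "p = [a]" by (cases p) (auto simp: Suc_le_eq)
  then show False using assms(2) by simp
qed

lemma leaf_arc_in_path_iff:
  assumes path: "is_path V E p" and ends: "hd p \<noteq> last p"
    and leaf: "{v. {l, v} \<in> E} = {vl}"
  shows "(l, vl) \<in> arcs_of p \<longleftrightarrow> hd p = l"
proof
  have walk: "is_walk V E p" and dist: "distinct p"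
    using path unfolding is_path_def by auto
  have len: "2 \<le> length p" using is_path_length_ge_2[OF path ends] .
  have hd_nth: "hd p = p ! 0" using len by (cases p) auto
  show "hd p = l" if arc: "(l, vl) \<in> arcs_of p"
  proof -
    obtain i where i: "Suc i < length p" "p ! i = l" "p ! Suc i = vl"
      using arc unfolding arcs_of_iff_nth by blast
    have "i = 0"
    proof (rule ccontr)
      assume "i \<noteq> 0"
      then obtain j where j: "i = Suc j" by (cases i) auto
      have "{l, p ! j} \<in> E"
        using is_walk_edge_nth[OF walk, of j] i j by (simp add: insert_commute)
      then have "p ! j = p ! Suc i" using leaf i by blast
      then show False using dist i j by (simp add: nth_eq_iff_index_eq)
    qed
    then show ?thesis using i hd_nth by simp
  qed
  show "(l, vl) \<in> arcs_of p" if "hd p = l"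
  proof -
    have "{l, p ! 1} \<in> E" using is_walk_edge_nth[OF walk, of 0] len that hd_nth by simp
    then have "p ! 1 = vl" using leaf by blast
    then show ?thesis using len that hd_nth by (auto simp: arcs_of_iff_nth intro!: exI[of _ 0])
  qed
qed

lemma orientation_ends:
  assumes "simple_graph V E" and "orientation E orient" and "e \<in> E"
  shows "fst (orient e) \<noteq> snd (orient e)" "fst (orient e) \<in> V" "snd (orient e) \<in> V"
proof -
  obtain u v where uv: "e = {u, v}" "u \<noteq> v" "u \<in> V" "v \<in> V"
    using assms(1,3) unfolding simple_graph_def by blast
  have "e = {fst (orient e), snd (orient e)}"
    using assms(2,3) unfolding orientation_def by blast
  with uv show "fst (orient e) \<noteq> snd (orient e)" "fst (orient e) \<in> V" "snd (orient e) \<in> V"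
    by (auto simp: doubleton_eq_iff)
qed

lemma mapping_route_ends_distinct:
  assumes "is_mapping Vr Er orient Vs Es mV mE" and "simple_graph Vr Er"
    and "orientation Er orient" and "e \<in> Er"
  shows "hd (mE e) \<noteq> last (mE e)"
  using assms orientation_ends[OF assms(2-4)]
  unfolding is_mapping_def by (metis inj_on_eq_iff)

theorem proposition3:
  fixes Vr :: "'b set" and Er :: "'b set set" and orient :: "'b set \<Rightarrow> 'b \<times> 'b"
    and Vs :: "'a set" and Es :: "'a set set"
    and dV :: "'b \<Rightarrow> int" and dE :: "'b set \<Rightarrow> int"
    and cV :: "'a \<Rightarrow> int" and cE :: "'a set \<Rightarrow> int"
    and mV :: "'b \<Rightarrow> 'a" and mE :: "'b set \<Rightarrow> 'a list"
  assumes "simple_graph Vr Er" and "connected_graph Vr Er"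
    and "simple_graph Vs Es" and "connected_graph Vs Es"
    and "orientation Er orient"
    and "feasible_mapping Vr Er orient Vs Es dV dE cV cE mV mE"
    and "eb \<in> Er"
    and "l \<in> Vs" and "{v. {l, v} \<in> Es} = {vl}"
  shows "y_inc mE eb (l, vl) = x_inc mV (fst (orient eb)) l"
proof -
  have mapping: "is_mapping Vr Er orient Vs Es mV mE"
    using assms(6) unfolding feasible_mapping_def by blast
  then have path: "is_path Vs Es (mE eb)" and start: "hd (mE eb) = mV (fst (orient eb))"
    using assms(7) unfolding is_mapping_def by auto
  have "hd (mE eb) \<noteq> last (mE eb)"
    using mapping_route_ends_distinct[OF mapping assms(1,5,7)] .
  then have "(l, vl) \<in> arcs_of (mE eb) \<longleftrightarrow> mV (fst (orient eb)) = l"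
    using leaf_arc_in_path_iff[OF path _ assms(9)] start by simp
  then show ?thesis unfolding y_inc_def x_inc_def by simp
qed

end
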